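(* Let $(a_n)_{n\ge1}$ be a sequence of positive real numbers with $\sum_n a_n=\infty$, and let $(m_n)_{n\ge1}$ be a sequence of positive integers such that for every $n\ge2$: $m_n>m_{n-1}$ and $1000\cdot4^{-m_n}\le a_n4^{-m_{n-1}}$. Then for Lebesgue-almost every $t\in[0,1]$ there are infinitely many $n$ such that $\operatorname{dist}(t,4^{-m_n}\mathbb{N})\le 4^{-m_n}a_n$.
   Context: $4^{-m}\mathbb{N}=\{4^{-m}k:k\in\mathbb{N}\}$. *)

theory Defs
  imports "HOL-Analysis.Analysis"
begin

definition grid4 :: "nat \<Rightarrow> real set" where
  "grid4 m = {k / 4 ^ m | k::nat. True}"

end

theory Submission
  imports Defs
begin

text \<open>
  Fix N and call t far at level n if its distance to the grid of mesh 4^(-m n) exceeds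
  a n 4^(-m n). Cover [0,1] by the 4-adic cells of level m M and count the cells containing
  a point that is far at all levels N..M-1. Inside such a cell, a point far also at level M
  lies in the middle part of relative length 1 - 2 a M, which meets at most
  (1 - 2 a M) 4^(m (M+1) - m M) + 2 cells of level m (M+1); by the gap hypothesis the
  rounding error 2 is at most a (M+1)/500 in density. Hence the density of counted cells
  is at most exp (1/2 - (a N + ... + a (M-1))), which tends to 0 since the series diverges.
  So for each N the points far at all levels n \<ge> N form a null set, and the theorem follows
  by a countable union over N.
\<close>

definition cell :: "nat \<Rightarrow> nat \<Rightarrow> real set" where
  "cell p j = {real j / 4^p .. (real j + 1) / 4^p}"

lemma emeasure_cell: "emeasure lborel (cell p j) = ennreal (1 / 4^p)"
proof -
  have "real j / 4^p \<le> (real j + 1) / 4^p"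
    by (simp add: divide_right_mono)
  then show ?thesis
    unfolding cell_def by (simp add: diff_divide_distrib[symmetric])
qed

lemma cell_cover:
  assumes "t \<in> {0..1}"
  shows "\<exists>j<4^p. t \<in> cell p j"
proof (cases "t = 1")
  case True
  have "real (4^p - 1 :: nat) = 4^p - 1"
    by (simp add: of_nat_diff)
  then have "t \<in> cell p (4^p - 1)"
    unfolding cell_def using True by simp
  then show ?thesis
    by (intro exI[of _ "4^p - 1"]) simp
next
  case False
  define j where "j = nat \<lfloor>t * 4^p\<rfloor>"
  have t: "0 \<le> t" "t < 1"
    using assms False by auto
  then have "real j = of_int \<lfloor>t * 4^p\<rfloor>"
    unfolding j_def by simp
  then have j: "real j \<le> t * 4^p" "t * 4^p < real j + 1"
    by linarith+
  have "real j < 4^p"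
    using j t by (smt (verit) mult_less_cancel_right2 zero_less_power)
  then have "j < 4^p"
    by (metis of_nat_less_iff of_nat_numeral of_nat_power)
  moreover have "t \<in> cell p j"
    unfolding cell_def using j by (auto simp: divide_le_eq le_divide_eq)
  ultimately show ?thesis
    by blast
qed

lemma cell_subset_unit_interval:
  assumes "j < 4^p"
  shows "cell p j \<subseteq> {0..1}"
proof -
  have "real j + 1 \<le> 4^p"
    using assms by (metis Suc_leI add.commute of_nat_Suc of_nat_le_iff of_nat_numeral of_nat_power)
  then have "(real j + 1) / 4^p \<le> 1"
    by simp
  then show ?thesis
    unfolding cell_def by (auto intro: order_trans[rotated])
qed

lemma infdist_grid4_cell:
  assumes "t \<in> cell p j" "r < infdist t (grid4 p)"
  shows "real j / 4^p + r < t \<and> t < (real j + 1) / 4^p - r"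
proof -
  have "k / 4^p \<in> grid4 p" for k :: nat
    unfolding grid4_def by blast
  then have "infdist t (grid4 p) \<le> dist t (real j / 4^p)"
    and "infdist t (grid4 p) \<le> dist t (real (Suc j) / 4^p)"
    by (blast intro: infdist_le)+
  moreover have "real j / 4^p \<le> t" "t \<le> (real j + 1) / 4^p"
    using assms(1) by (auto simp: cell_def)
  ultimately show ?thesis
    using assms(2) by (auto simp: dist_real_def add.commute)
qed

lemma finite_nat_between: "finite {j::nat. x < real j \<and> real j < y}"
  by (rule finite_subset[of _ "{..nat \<lceil>y\<rceil>}"]) (auto, linarith)

lemma card_nat_between:
  fixes x y :: real
  assumes "x \<le> y"
  shows "real (card {j::nat. x < real j \<and> real j < y}) \<le> y - x + 1"
proof -
  let ?S = "{j::nat. x < real j \<and> real j < y}"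
  have "int ` ?S \<subseteq> {\<lfloor>x\<rfloor> + 1 .. \<lceil>y\<rceil> - 1}"
    by (auto, linarith+)
  then have "card (int ` ?S) \<le> card {\<lfloor>x\<rfloor> + 1 .. \<lceil>y\<rceil> - 1}"
    by (rule card_mono[rotated]) simp
  also have "\<dots> = nat (\<lceil>y\<rceil> - 1 - \<lfloor>x\<rfloor>)"
    by simp
  moreover have "real (nat (\<lceil>y\<rceil> - 1 - \<lfloor>x\<rfloor>)) \<le> y - x + 1"
    using assms by linarith
  ultimately show ?thesis
    by (simp add: card_image)
qed

lemma cells_meeting_subset:
  "{j. \<exists>t\<in>cell q j. u < t \<and> t < v} \<subseteq> {j::nat. u * 4^q - 1 < real j \<and> real j < v * 4^q}"
proof safe
  fix j t assume t: "t \<in> cell q j" "u < t" "t < v"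
  have "real j \<le> t * 4^q" "t * 4^q \<le> real j + 1"
    using t(1) by (auto simp: cell_def divide_le_eq le_divide_eq)
  moreover have "u * 4^q < t * 4^q" "t * 4^q < v * 4^q"
    using t(2,3) by simp_all
  ultimately show "u * 4^q - 1 < real j" "real j < v * 4^q"
    by linarith+
qed

lemma finite_cells_meeting: "finite {j. \<exists>t\<in>cell q j. u < t \<and> t < v}"
  by (rule finite_subset[OF cells_meeting_subset finite_nat_between])

lemma card_cells_meeting:
  "real (card {j. \<exists>t\<in>cell q j. u < t \<and> t < v}) \<le> max 0 ((v - u) * 4^q + 2)"
proof (cases "u < v")
  case True
  define x where "x = u * 4^q - 1"
  define y where "y = v * 4^q"
  have "card {j. \<exists>t\<in>cell q j. u < t \<and> t < v} \<le> card {j::nat. x < real j \<and> real j < y}"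
    unfolding x_def y_def
    by (rule card_mono[OF finite_nat_between cells_meeting_subset])
  moreover have "x \<le> y"
    using True unfolding x_def y_def by (smt (verit) mult_right_mono zero_le_power)
  ultimately have "real (card {j. \<exists>t\<in>cell q j. u < t \<and> t < v}) \<le> y - x + 1"
    using card_nat_between[of x y] by linarith
  then show ?thesis
    unfolding x_def y_def by (simp add: algebra_simps)
next
  case False
  then have "{j. \<exists>t\<in>cell q j. u < t \<and> t < v} = {}"
    by auto
  then show ?thesis
    by (metis card.empty max.cobounded1 of_nat_0)
qed

definition far_cells :: "(nat \<Rightarrow> real) \<Rightarrow> (nat \<Rightarrow> nat) \<Rightarrow> nat \<Rightarrow> nat \<Rightarrow> nat set" where
  "far_cells a m N M = {j. j < 4^m M \<and>
     (\<exists>t\<in>cell (m M) j. \<forall>n\<in>{N..<M}. a n / 4^m n < infdist t (grid4 (m n)))}"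

definition far_density :: "(nat \<Rightarrow> real) \<Rightarrow> (nat \<Rightarrow> nat) \<Rightarrow> nat \<Rightarrow> nat \<Rightarrow> real" where
  "far_density a m N M = real (card (far_cells a m N M)) / 4^m M"

lemma finite_far_cells: "finite (far_cells a m N M)"
  by (rule finite_subset[of _ "{..<4^m M}"]) (auto simp: far_cells_def)

lemma far_density_nonneg: "0 \<le> far_density a m N M"
  by (simp add: far_density_def)

lemma far_density_le_1: "far_density a m N M \<le> 1"
proof -
  have "card (far_cells a m N M) \<le> card {..<(4::nat)^m M}"
    by (rule card_mono) (auto simp: far_cells_def)
  then have "real (card (far_cells a m N M)) \<le> 4^m M"
    by (metis card_lessThan of_nat_le_iff of_nat_numeral of_nat_power)
  then show ?thesis
    by (simp add: far_density_def)
qed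

lemma far_cells_Suc_subset:
  assumes "N \<le> M"
  shows "far_cells a m N (Suc M) \<subseteq>
    (\<Union>j'\<in>far_cells a m N M. {j. \<exists>t\<in>cell (m (Suc M)) j.
        (real j' + a M) / 4^m M < t \<and> t < (real j' + 1 - a M) / 4^m M})"
proof
  fix j assume "j \<in> far_cells a m N (Suc M)"
  then obtain t where j: "j < 4^m (Suc M)" and t: "t \<in> cell (m (Suc M)) j"
    and far: "\<forall>n\<in>{N..<Suc M}. a n / 4^m n < infdist t (grid4 (m n))"
    unfolding far_cells_def by auto
  have "t \<in> {0..1}"
    using cell_subset_unit_interval[OF j] t by blast
  then obtain j' where j': "j' < 4^m M" "t \<in> cell (m M) j'"
    using cell_cover by blast
  moreover have "\<forall>n\<in>{N..<M}. a n / 4^m n < infdist t (grid4 (m n))"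
    using far by auto
  ultimately have "j' \<in> far_cells a m N M"
    unfolding far_cells_def by auto
  moreover have "a M / 4^m M < infdist t (grid4 (m M))"
    using far assms by auto
  from infdist_grid4_cell[OF j'(2) this]
  have "(real j' + a M) / 4^m M < t \<and> t < (real j' + 1 - a M) / 4^m M"
    by (simp add: add_divide_distrib diff_divide_distrib)
  ultimately show "j \<in> (\<Union>j'\<in>far_cells a m N M. {j. \<exists>t\<in>cell (m (Suc M)) j.
        (real j' + a M) / 4^m M < t \<and> t < (real j' + 1 - a M) / 4^m M})"
    using t by blast
qed

lemma far_density_Suc:
  assumes "m M < m (Suc M)" "N \<le> M"
  shows "far_density a m N (Suc M) \<le>
    far_density a m N M * max 0 (1 - 2 * a M + 2 / 4^(m (Suc M) - m M))"
proof -
  define \<rho> :: real where "\<rho> = 4^(m (Suc M) - m M)"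
  have split: "(4::real)^m (Suc M) = 4^m M * \<rho>"
    unfolding \<rho>_def using assms(1) by (simp flip: power_add)
  have "\<rho> > 0"
    unfolding \<rho>_def by simp
  define K where "K j' = {j. \<exists>t\<in>cell (m (Suc M)) j.
    (real j' + a M) / 4^m M < t \<and> t < (real j' + 1 - a M) / 4^m M}" for j'
  have K: "real (card (K j')) \<le> max 0 ((1 - 2 * a M) * \<rho> + 2)" for j'
  proof -
    have "((real j' + 1 - a M) / 4^m M - (real j' + a M) / 4^m M) * 4^m (Suc M) = (1 - 2 * a M) * \<rho>"
      unfolding split by (simp add: field_simps)
    then show ?thesis
      using card_cells_meeting[of "m (Suc M)" "(real j' + a M) / 4^m M" "(real j' + 1 - a M) / 4^m M"]
      unfolding K_def by argo
  qed
  have "real (card (far_cells a m N (Suc M))) \<le> real (card (\<Union>j'\<in>far_cells a m N M. K j'))"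
    using far_cells_Suc_subset[OF assms(2), of a m] unfolding K_def[abs_def]
    by (intro of_nat_mono card_mono) (auto simp: finite_far_cells finite_cells_meeting)
  also have "\<dots> \<le> (\<Sum>j'\<in>far_cells a m N M. real (card (K j')))"
    by (metis card_UN_le finite_far_cells of_nat_le_iff of_nat_sum)
  also have "\<dots> \<le> real (card (far_cells a m N M)) * max 0 ((1 - 2 * a M) * \<rho> + 2)"
    using sum_mono[of "far_cells a m N M", OF K] by simp
  finally have "far_density a m N (Suc M) \<le> far_density a m N M * (max 0 ((1 - 2 * a M) * \<rho> + 2) / \<rho>)"
    unfolding far_density_def split using \<open>\<rho> > 0\<close> by (simp add: divide_right_mono)
  also have "max 0 ((1 - 2 * a M) * \<rho> + 2) / \<rho> = max 0 (1 - 2 * a M + 2 / \<rho>)"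
    using \<open>\<rho> > 0\<close> by (simp add: max_divide_distrib_right add_divide_distrib)
  finally show ?thesis
    unfolding \<rho>_def .
qed

lemma max_0_one_plus_le_exp: "max 0 (1 + x) \<le> exp (x::real)"
  using exp_ge_add_one_self[of x] by (simp add: less_imp_le)

text \<open>The term min (a M / 500) (1/2) absorbs the rounding error of the next refinement step.\<close>

lemma far_density_bound:
  fixes a :: "nat \<Rightarrow> real" and m :: "nat \<Rightarrow> nat"
  assumes a_pos: "\<And>n. N \<le> n \<Longrightarrow> 0 < a n"
    and m_inc: "\<And>n. N \<le> n \<Longrightarrow> m n < m (Suc n)"
    and m_gap: "\<And>n. N \<le> n \<Longrightarrow> 1000 / 4^m (Suc n) \<le> a (Suc n) / 4^m n"
    and "N \<le> M"
  shows "far_density a m N M \<le> exp (min (a M / 500) (1/2) - (\<Sum>k=N..<M. a k))"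
  using \<open>N \<le> M\<close>
proof (induction M rule: dec_induct)
  case base
  have "far_density a m N N \<le> 1"
    by (rule far_density_le_1)
  also have "1 \<le> exp (min (a N / 500) (1/2) - (\<Sum>k=N..<N. a k))"
    using a_pos[of N] by simp
  finally show ?case .
next
  case (step M)
  define b where "b n = min (a n / 500) (1/2)" for n
  define S where "S = (\<Sum>k=N..<M. a k)"
  define \<rho> :: real where "\<rho> = 4^(m (Suc M) - m M)"
  have split: "(4::real)^m (Suc M) = 4^m M * \<rho>"
    unfolding \<rho>_def using m_inc[OF step(1)] by (simp flip: power_add)
  have "\<rho> \<ge> 4"
    unfolding \<rho>_def using m_inc[OF step(1)] power_increasing[of 1 "m (Suc M) - m M" "4::real"]
    by simp
  moreover have "1000 / \<rho> \<le> a (Suc M)"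
    using m_gap[OF step(1)] unfolding split by (simp add: field_simps)
  ultimately have gap: "2 / \<rho> \<le> b (Suc M)"
    unfolding b_def by (simp add: field_simps)
  have "far_density a m N (Suc M) \<le> far_density a m N M * max 0 (1 - 2 * a M + 2 / \<rho>)"
    unfolding \<rho>_def using far_density_Suc m_inc step(1) by blast
  also have "\<dots> \<le> exp (b M - S) * exp (b (Suc M) - 2 * a M)"
  proof (rule mult_mono)
    show "far_density a m N M \<le> exp (b M - S)"
      using step.IH unfolding b_def S_def .
    have "max 0 (1 - 2 * a M + 2 / \<rho>) \<le> max 0 (1 + (b (Suc M) - 2 * a M))"
      using gap by simp
    also have "\<dots> \<le> exp (b (Suc M) - 2 * a M)"
      by (rule max_0_one_plus_le_exp)
    finally show "max 0 (1 - 2 * a M + 2 / \<rho>) \<le> exp (b (Suc M) - 2 * a M)" .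
  qed (simp_all add: far_density_nonneg)
  also have "\<dots> \<le> exp (b (Suc M) - (S + a M))"
    using a_pos[OF step(1)] by (simp add: b_def flip: exp_add)
  finally show ?case
    using step(1) unfolding b_def S_def by simp
qed

definition far_set :: "(nat \<Rightarrow> real) \<Rightarrow> (nat \<Rightarrow> nat) \<Rightarrow> nat \<Rightarrow> real set" where
  "far_set a m N = {t \<in> {0..1}. \<forall>n\<ge>N. a n / 4^m n < infdist t (grid4 (m n))}"

lemma far_set_sets: "far_set a m N \<in> sets lborel"
proof -
  have "far_set a m N = {0..1} \<inter> (\<Inter>n\<in>{N..}. {t. a n / 4^m n < infdist t (grid4 (m n))})"
    unfolding far_set_def by auto
  moreover have "{t. r < infdist t A} \<in> sets borel" for r and A :: "real set"
    by (intro borel_open open_Collect_less continuous_intros)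
  ultimately show ?thesis
    by (auto intro!: sets.countable_INT' countableI_type)
qed

lemma far_set_subset_far_cells:
  assumes "N \<le> M"
  shows "far_set a m N \<subseteq> (\<Union>j\<in>far_cells a m N M. cell (m M) j)"
proof
  fix t assume t: "t \<in> far_set a m N"
  then obtain j where j: "j < 4^m M" "t \<in> cell (m M) j"
    using cell_cover unfolding far_set_def by blast
  moreover have "\<forall>n\<in>{N..<M}. a n / 4^m n < infdist t (grid4 (m n))"
    using t unfolding far_set_def by auto
  ultimately have "j \<in> far_cells a m N M"
    unfolding far_cells_def by blast
  with j show "t \<in> (\<Union>j\<in>far_cells a m N M. cell (m M) j)"
    by blast
qed

lemma emeasure_far_set_le:
  assumes "N \<le> M"
  shows "emeasure lborel (far_set a m N) \<le> ennreal (far_density a m N M)"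
proof -
  have "emeasure lborel (far_set a m N) \<le> emeasure lborel (\<Union>j\<in>far_cells a m N M. cell (m M) j)"
    using far_set_subset_far_cells[OF assms] by (intro emeasure_mono) (auto simp: cell_def)
  also have "\<dots> \<le> (\<Sum>j\<in>far_cells a m N M. emeasure lborel (cell (m M) j))"
    by (rule emeasure_subadditive_finite) (auto simp: finite_far_cells cell_def)
  also have "\<dots> = ennreal (far_density a m N M)"
    by (simp add: emeasure_cell far_density_def ennreal_of_nat_eq_real_of_nat flip: ennreal_mult)
  finally show ?thesis .
qed

lemma far_set_null:
  fixes a :: "nat \<Rightarrow> real" and m :: "nat \<Rightarrow> nat"
  assumes a_pos: "\<And>n. N \<le> n \<Longrightarrow> 0 < a n"
    and m_inc: "\<And>n. N \<le> n \<Longrightarrow> m n < m (Suc n)"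
    and m_gap: "\<And>n. N \<le> n \<Longrightarrow> 1000 / 4^m (Suc n) \<le> a (Suc n) / 4^m n"
    and a_div: "\<And>B. \<exists>M\<ge>N. B < (\<Sum>k=N..<M. a k)"
  shows "far_set a m N \<in> null_sets lborel"
proof (rule null_setsI[OF _ far_set_sets])
  have "emeasure lborel (far_set a m N) \<le> 0 + ennreal e" if "0 < e" for e
  proof -
    obtain M where M: "N \<le> M" "1/2 - ln e < (\<Sum>k=N..<M. a k)"
      using a_div by blast
    have "far_density a m N M \<le> exp (min (a M / 500) (1/2) - (\<Sum>k=N..<M. a k))"
      using far_density_bound[of N a m M] a_pos m_inc m_gap M(1) by blast
    also have "\<dots> \<le> exp (ln e)"
      using M(2) by simp
    finally have "far_density a m N M \<le> e"
      using \<open>0 < e\<close> by simp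
    then show ?thesis
      using emeasure_far_set_le[OF M(1), of a m] by (simp add: order_trans ennreal_leI)
  qed
  then show "emeasure lborel (far_set a m N) = 0"
    using ennreal_le_epsilon by (metis le_zero_eq)
qed

lemma not_summable_partial_sums_unbounded:
  fixes f :: "nat \<Rightarrow> real"
  assumes "\<And>n. 0 \<le> f n" and "\<not> summable f"
  shows "\<exists>n. B < (\<Sum>k<n. f k)"
proof (rule ccontr)
  assume "\<nexists>n. B < (\<Sum>k<n. f k)"
  then have "(\<Sum>k\<le>n. f k) \<le> B" for n
    by (metis lessThan_Suc_atMost not_less)
  then show False
    using bounded_imp_summable assms by blast
qed

lemma tail_sums_unbounded:
  fixes a :: "nat \<Rightarrow> real"
  assumes "\<And>n. N \<le> n \<Longrightarrow> 0 \<le> a n" and "\<not> summable a"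
  shows "\<exists>M\<ge>N. B < (\<Sum>k=N..<M. a k)"
proof -
  have "\<not> summable (\<lambda>k. a (k + N))"
    using assms(2) by simp
  then obtain n where "B < (\<Sum>k<n. a (k + N))"
    using not_summable_partial_sums_unbounded assms(1) by (metis le_add2)
  also have "(\<Sum>k<n. a (k + N)) = (\<Sum>k=N..<n + N. a k)"
    using sum.shift_bounds_nat_ivl[of a 0 N n] by (simp add: atLeast0LessThan)
  finally show ?thesis
    by (intro exI[of _ "n + N"]) simp
qed

theorem lemma2p3:
  fixes a :: "nat \<Rightarrow> real" and m :: "nat \<Rightarrow> nat"
  assumes a_pos: "\<And>n. n \<ge> 1 \<Longrightarrow> a n > 0"
    and a_div: "\<not> summable (\<lambda>n. a (n + 1))"
    and m_pos: "\<And>n. n \<ge> 1 \<Longrightarrow> m n > 0"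
    and m_inc: "\<And>n. n \<ge> 2 \<Longrightarrow> m n > m (n - 1)"
    and m_gap: "\<And>n. n \<ge> 2 \<Longrightarrow> 1000 * (1 / 4 ^ m n) \<le> a n * (1 / 4 ^ m (n - 1))"
  shows "AE t in lborel. t \<in> {0..1} \<longrightarrow>
           infinite {n. n \<ge> 1 \<and> infdist t (grid4 (m n)) \<le> a n / 4 ^ m n}"
proof -
  have "\<not> summable a"
    using a_div summable_iff_shift[of a 1] by simp
  have "far_set a m N \<in> null_sets lborel" if "N \<ge> 1" for N
  proof (rule far_set_null)
    show "\<exists>M\<ge>N. B < (\<Sum>k=N..<M. a k)" for B
      using tail_sums_unbounded[of N a] a_pos \<open>\<not> summable a\<close> that by (simp add: less_imp_le)
  qed (use a_pos m_inc[of "Suc _"] m_gap[of "Suc _"] that in auto)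
  then have null: "(\<Union>N\<in>{1..}. far_set a m N) \<in> null_sets lborel"
    by (intro null_sets_UN') auto
  have "t \<in> (\<Union>N\<in>{1..}. far_set a m N)"
    if "t \<in> {0..1}" and fin: "finite {n. n \<ge> 1 \<and> infdist t (grid4 (m n)) \<le> a n / 4 ^ m n}" for t
  proof -
    obtain N where "\<And>n. n \<ge> 1 \<and> infdist t (grid4 (m n)) \<le> a n / 4 ^ m n \<Longrightarrow> n < N"
      using finite_nat_bounded[OF fin] by auto
    then have "t \<in> far_set a m (max N 1)"
      using \<open>t \<in> {0..1}\<close> unfolding far_set_def by force
    then show ?thesis
      by auto
  qed
  then show ?thesis
    by (intro AE_I'[OF null]) auto
qed

end
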